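(* Let $C$ be a field of characteristic zero. Let $L=\sum_{k=0}^{r_L} l_k(x)\partial^k\in C[x][\partial]$ be an operator of order $r_L$ whose coefficients $l_k\in C[x]$ have degree at most $d_L$, and let $P\in C[x,y]$ with $\deg_y P=r_P$, $\deg_x P=d_P$, such that $P$ is square-free as an element of $C(x)[y]$ and has no non-constant divisor in $\bar C[y]$. Let $r,d\in\mathbb N$ be such that \[ r\ge r_Lr_P\quad\text{and}\quad d\ge \frac{r(3r_P+d_L-1)d_Pr_Lr_P}{r+1-r_Lr_P}. \] Then there exists an operator $M\in C[x][\partial]$ of order at most $r$ and degree at most $d$ such that for every solution $g$ of $P$ and every solution $f$ of $L$ the composition $f\circ g$ is a solution of $M$. In particular, there is such an operator $M$ of order $r_Lr_P$ and degree $(3r_P+d_L-1)d_Pr_L^2r_P^2$.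
   Context: $C[x][\partial]$ is the ring of linear differential operators with polynomial coefficients, with $\partial x=x\partial+1$; the degree of an operator is the maximum degree of its polynomial coefficients. $\bar C$ is an algebraic closure of $C$. A solution of $P$ is a $g$ with $P(x,g(x))=0$; a solution of $L$ is an $f$ with $L(f)=0$. Compositions are understood as follows: for every $\alpha\in C$, every solution $g\in C[[x-\alpha]]$ of $P$ and every solution $f\in C[[x-g(\alpha)]]$ of $L$, the composition $f\circ g\in C[[x-\alpha]]$ (for $C=\mathbb C$ this coincides with composition of analytic functions). *)

theory Defs
  imports "HOL-Algebra.Algebraic_Closure_Type"
          "HOL-Computational_Algebra.Computational_Algebra"
          "HOL-Computational_Algebra.Fraction_Field"
begin

text \<open>
  A bivariate polynomial P in C[x,y] is an element of "'a poly poly":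
  a polynomial in y whose coefficients are polynomials in x, i.e.
  P(x,y) = sum_j (coeff P j)(x) * y^j.
  A differential operator L = sum_k l_k(x) d^k in C[x][d] is stored by its
  (unique) normal-form coefficient sequence, also as an "'a poly poly" used
  purely as a finite coefficient container: coeff L k = l_k.  (No product
  of operators is ever used, so the commutative ring structure of
  "'a poly poly" plays no role.)
  A power series in C[[x - a]] is an "'a fps" in the variable t = x - a.
\<close>

type_synonym 'a diffop = "'a poly poly"

definition op_order :: "'a::zero diffop \<Rightarrow> nat" where
  "op_order L = degree L"

definition op_degree :: "'a::zero diffop \<Rightarrow> nat" where
  "op_degree L = Max {degree (coeff L k) | k. k \<le> degree L}"

definition deg_y :: "'a::zero poly poly \<Rightarrow> nat" where
  "deg_y P = degree P"

definition deg_x :: "'a::zero poly poly \<Rightarrow> nat" where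
  "deg_x P = Max {degree (coeff P j) | j. j \<le> degree P}"

definition poly_at :: "'a::comm_ring_1 \<Rightarrow> 'a poly \<Rightarrow> 'a fps" where
  "poly_at a p = fps_of_poly (pcompose p [:a, 1:])"

definition apply_op :: "'a::comm_ring_1 \<Rightarrow> 'a diffop \<Rightarrow> 'a fps \<Rightarrow> 'a fps" where
  "apply_op b L f = (\<Sum>k\<le>degree L. poly_at b (coeff L k) * (fps_deriv ^^ k) f)"

definition op_solution :: "'a::comm_ring_1 \<Rightarrow> 'a diffop \<Rightarrow> 'a fps \<Rightarrow> bool" where
  "op_solution b L f \<longleftrightarrow> apply_op b L f = 0"

definition alg_solution :: "'a::comm_ring_1 \<Rightarrow> 'a poly poly \<Rightarrow> 'a fps \<Rightarrow> bool" where
  "alg_solution a P g \<longleftrightarrow> (\<Sum>j\<le>degree P. poly_at a (coeff P j) * g ^ j) = 0"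

text \<open>composition f o g in C[[x-a]] of g in C[[x-a]] with f in C[[x - g(a)]]\<close>
definition comp_at :: "'a::field fps \<Rightarrow> 'a fps \<Rightarrow> 'a fps" where
  "comp_at f g = fps_compose f (g - fps_const (fps_nth g 0))"

definition squarefree_over_Cx :: "'a::field poly poly \<Rightarrow> bool" where
  "squarefree_over_Cx P \<longleftrightarrow> squarefree (map_poly to_fract P)"

definition no_y_divisor :: "'a::field poly poly \<Rightarrow> bool" where
  "no_y_divisor P \<longleftrightarrow>
     \<not> (\<exists>q :: 'a alg_closure poly. degree q > 0 \<and>
          map_poly (\<lambda>c. [:c:]) q dvd map_poly (map_poly to_ac) P)"

end

theory Submission
  imports Defs
begin

text \<open>
  Write \<open>h = f \<circ> g\<close> and \<open>F\<^sub>k = f\<^sup>(\<^sup>k\<^sup>) \<circ> g\<close>, so that \<open>F\<^sub>k' = F\<^sub>k\<^sub>+\<^sub>1 g'\<close>. Along a solution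
  \<open>g\<close> of \<open>P\<close> we have \<open>g' = -P\<^sub>x/P\<^sub>y\<close>, and \<open>L(f) = 0\<close> expresses \<open>l F\<^sub>r\<^sub>L\<close> through
  \<open>F\<^sub>0, \<dots>, F\<^sub>r\<^sub>L\<^sub>-\<^sub>1\<close>, where \<open>l\<close> is the leading coefficient of \<open>L\<close>. Hence, by induction,
  \<open>(P\<^sub>y\<^sup>e l)\<^sup>i h\<^sup>(\<^sup>i\<^sup>) = \<Sum>\<^sub>k\<^sub><\<^sub>r\<^sub>L A\<^sub>i\<^sub>k(x, g) F\<^sub>k\<close> for polynomials \<open>A\<^sub>i\<^sub>k\<close> whose bidegree grows
  linearly in \<open>i\<close> (with \<open>e = 1\<close> if \<open>P\<close> is linear in \<open>y\<close> and \<open>e = 2\<close> otherwise).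
  An operator \<open>M = \<Sum>\<^sub>i\<^sub>\<le>\<^sub>r m\<^sub>i \<partial>\<^sup>i\<close> therefore annihilates \<open>h\<close> as soon as each
  \<open>\<Sum>\<^sub>i m\<^sub>i (P\<^sub>y\<^sup>e l)\<^sup>r\<^sup>-\<^sup>i A\<^sub>i\<^sub>k\<close> is a multiple of \<open>P\<close>. With unknown coefficients for the \<open>m\<^sub>i\<close>
  and for the quotients this is a homogeneous linear system, which under the degree hypothesis
  has more unknowns than equations; a nonzero solution gives \<open>M \<noteq> 0\<close> because \<open>P \<noteq> 0\<close>.
  The denominators do not vanish at \<open>g\<close>: \<open>P\<^sub>y(x, g) \<noteq> 0\<close> because \<open>P\<close> is square-free, and
  \<open>l(g) \<noteq> 0\<close> because \<open>P\<close> has no factor in \<open>C[y]\<close>, so that \<open>g\<close> is not constant.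
\<close>

section \<open>Substituting a power series for \<open>y\<close>\<close>

lemma poly_at_0 [simp]: "poly_at a 0 = 0"
  by (simp add: poly_at_def)

lemma poly_at_add [simp]: "poly_at a (p + q) = poly_at a p + poly_at a q"
  by (simp add: poly_at_def pcompose_add fps_of_poly_add)

lemma poly_at_uminus [simp]: "poly_at a (- p) = - poly_at a p"
  by (simp add: poly_at_def pcompose_uminus fps_of_poly_uminus)

lemma poly_at_diff [simp]: "poly_at a (p - q) = poly_at a p - poly_at a q"
  by (simp add: poly_at_def pcompose_diff fps_of_poly_diff)

lemma poly_at_mult [simp]: "poly_at a (p * q) = poly_at a p * poly_at a q"
  by (simp add: poly_at_def pcompose_mult fps_of_poly_mult)

lemma poly_at_smult [simp]: "poly_at a (smult c p) = fps_const c * poly_at a p"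
  by (simp add: poly_at_def pcompose_smult fps_of_poly_smult)

lemma poly_at_const [simp]: "poly_at a [:c:] = fps_const c"
  by (simp add: poly_at_def fps_of_poly_const)

lemma poly_at_1 [simp]: "poly_at a 1 = 1"
  by (simp add: poly_at_def pcompose_1)

lemma poly_at_pderiv: "poly_at a (pderiv p) = fps_deriv (poly_at a p)"
  by (simp add: poly_at_def pderiv_pcompose fps_of_poly_pderiv[symmetric] pderiv_pCons)

lemma poly_at_eq_0_iff [simp]: "poly_at (a::'a::field) p = 0 \<longleftrightarrow> p = 0"
  by (simp add: poly_at_def fps_of_poly_eq_iff[of _ 0, simplified] pcompose_eq_0_iff)

text \<open>\<open>subst_y a g Q\<close> is \<open>Q(x, g(x))\<close> as a power series in \<open>x - a\<close>.\<close>

definition subst_y :: "'a::field \<Rightarrow> 'a fps \<Rightarrow> 'a poly poly \<Rightarrow> 'a fps" where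
  "subst_y a g Q = poly (map_poly (poly_at a) Q) g"

lemma subst_y_pCons: "subst_y a g (pCons c Q) = poly_at a c + g * subst_y a g Q"
  by (simp add: subst_y_def map_poly_pCons)

lemma subst_y_0 [simp]: "subst_y a g 0 = 0"
  by (simp add: subst_y_def)

lemma subst_y_const [simp]: "subst_y a g [:c:] = poly_at a c"
  using subst_y_pCons[of a g c 0] by simp

lemma subst_y_1 [simp]: "subst_y a g 1 = 1"
  by (simp add: subst_y_def)

lemma subst_y_add [simp]: "subst_y a g (Q + R) = subst_y a g Q + subst_y a g R"
proof (induction Q arbitrary: R)
  case (pCons c Q)
  then show ?case
    by (cases R) (simp add: subst_y_pCons algebra_simps)
qed simp

lemma subst_y_uminus [simp]: "subst_y a g (- Q) = - subst_y a g Q"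
  by (induction Q) (simp_all add: subst_y_pCons)

lemma subst_y_diff [simp]: "subst_y a g (Q - R) = subst_y a g Q - subst_y a g R"
  using subst_y_add[of a g Q "- R"] by simp

lemma subst_y_smult [simp]: "subst_y a g (smult c Q) = poly_at a c * subst_y a g Q"
  by (induction Q) (simp_all add: subst_y_pCons algebra_simps)

lemma subst_y_mult [simp]: "subst_y a g (Q * R) = subst_y a g Q * subst_y a g R"
  by (induction Q) (simp_all add: subst_y_pCons algebra_simps)

lemma subst_y_power [simp]: "subst_y a g (Q ^ n) = subst_y a g Q ^ n"
  by (induction n) simp_all

lemma subst_y_sum [simp]: "subst_y a g (sum F A) = (\<Sum>x\<in>A. subst_y a g (F x))"
  by (induction A rule: infinite_finite_induct) simp_all

lemma subst_y_of_nat [simp]: "subst_y a g (of_nat n) = of_nat n"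
  by (induction n) simp_all

lemma alg_solution_iff_subst_y: "alg_solution a P g \<longleftrightarrow> subst_y a g P = 0"
  by (simp add: alg_solution_def subst_y_def poly_altdef degree_map_poly coeff_map_poly)

definition pderiv_x :: "'a::idom poly poly \<Rightarrow> 'a poly poly" where
  "pderiv_x Q = map_poly pderiv Q"

lemma fps_deriv_subst_y:
  "fps_deriv (subst_y a g Q) = subst_y a g (pderiv_x Q) + subst_y a g (pderiv Q) * fps_deriv g"
proof (induction Q)
  case (pCons c Q)
  have "pderiv_x (pCons c Q) = pCons (pderiv c) (pderiv_x Q)"
    by (simp add: pderiv_x_def map_poly_pCons)
  with pCons.IH show ?case
    by (simp add: subst_y_pCons pderiv_pCons poly_at_pderiv algebra_simps)
qed (simp add: pderiv_x_def)

definition total_deriv :: "'a::idom poly poly \<Rightarrow> 'a poly poly \<Rightarrow> 'a poly poly" where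
  "total_deriv P Q = pderiv P * pderiv_x Q - pderiv_x P * pderiv Q"

lemma alg_solution_deriv:
  assumes "subst_y a g P = 0"
  shows "subst_y a g (pderiv P) * fps_deriv g = - subst_y a g (pderiv_x P)"
proof -
  have "fps_deriv (subst_y a g P) = 0" using assms by simp
  then show ?thesis unfolding fps_deriv_subst_y by (simp add: eq_neg_iff_add_eq_0 add.commute)
qed

lemma fps_deriv_subst_y_along_solution:
  assumes "subst_y a g P = 0"
  shows "subst_y a g (pderiv P) * fps_deriv (subst_y a g Q) = subst_y a g (total_deriv P Q)"
proof -
  have "subst_y a g (pderiv P) * fps_deriv (subst_y a g Q)
      = subst_y a g (pderiv P) * subst_y a g (pderiv_x Q)
        + subst_y a g (pderiv Q) * (subst_y a g (pderiv P) * fps_deriv g)"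
    by (simp add: fps_deriv_subst_y algebra_simps)
  then show ?thesis
    unfolding alg_solution_deriv[OF assms] by (simp add: total_deriv_def algebra_simps)
qed

section \<open>Composition with a solution\<close>

definition const_y :: "'a::zero poly \<Rightarrow> 'a poly poly" where
  "const_y l = map_poly (\<lambda>c. [:c:]) l"

lemma subst_y_const_y: "subst_y a g (const_y l) = poly (map_poly fps_const l) g"
  by (induction l) (simp_all add: const_y_def map_poly_pCons subst_y_pCons)

lemma poly_at_fps_compose:
  fixes g :: "'a::field fps"
  shows "poly_at (g$0) p oo (g - fps_const (g$0)) = poly (map_poly fps_const p) g"
proof (induction p)
  case (pCons c p)
  have at: "poly_at (g$0) (pCons c p) = fps_const c + (fps_const (g$0) + fps_X) * poly_at (g$0) p"
    by (simp add: poly_at_def pcompose_pCons fps_of_poly_add fps_of_poly_mult fps_of_poly_const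
        fps_of_poly_linear algebra_simps)
  have "(g - fps_const (g$0)) $ 0 = 0" by simp
  with pCons.IH show ?case
    unfolding at by (simp add: fps_compose_add_distrib fps_compose_mult_distrib fps_const_compose
        fps_X_fps_compose_startby0 map_poly_pCons)
qed simp

definition comp_deriv :: "'a::field fps \<Rightarrow> 'a fps \<Rightarrow> nat \<Rightarrow> 'a fps" where
  "comp_deriv f g k = (fps_deriv ^^ k) f oo (g - fps_const (g$0))"

lemma comp_deriv_0: "comp_deriv f g 0 = comp_at f g"
  by (simp add: comp_deriv_def comp_at_def)

lemma fps_deriv_comp_deriv: "fps_deriv (comp_deriv f g k) = comp_deriv f g (Suc k) * fps_deriv g"
  unfolding comp_deriv_def by (subst fps_compose_deriv) simp_all

lemma op_solution_comp_deriv_relation: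
  fixes g :: "'a::field fps"
  assumes "op_solution (g$0) L f"
  shows "(\<Sum>k\<le>degree L. subst_y a g (const_y (coeff L k)) * comp_deriv f g k) = 0"
proof -
  have "(g - fps_const (g$0)) $ 0 = 0" by simp
  moreover have "apply_op (g$0) L f oo (g - fps_const (g$0)) = 0"
    using assms by (simp add: op_solution_def fps_compose_0)
  ultimately show ?thesis
    by (simp add: apply_op_def fps_compose_sum_distrib fps_compose_mult_distrib
        poly_at_fps_compose subst_y_const_y comp_deriv_def)
qed

section \<open>Nonvanishing of the denominators\<close>

text \<open>The field-as-ring instances of \<open>Field_as_Ring\<close>, for fraction fields: they make
  \<open>C(x)[y]\<close> a Euclidean ring with Bezout identities.\<close>

instantiation fract ::
  (idom) "{unique_euclidean_ring, normalization_euclidean_semiring, normalization_semidom_multiplicative}"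
begin
definition [simp]: "normalize_fract = (normalize_field :: 'a fract \<Rightarrow> _)"
definition [simp]: "unit_factor_fract = (unit_factor_field :: 'a fract \<Rightarrow> _)"
definition [simp]: "modulo_fract = (mod_field :: 'a fract \<Rightarrow> _)"
definition [simp]: "euclidean_size_fract = (euclidean_size_field :: 'a fract \<Rightarrow> _)"
definition [simp]: "division_segment (x :: 'a fract) = 1"
instance
  by standard (simp_all add: dvd_field_iff field_split_simps split: if_splits)
end

instantiation fract :: (idom) euclidean_ring_gcd
begin
definition gcd_fract :: "'a fract \<Rightarrow> 'a fract \<Rightarrow> 'a fract" where
  "gcd_fract = Euclidean_Algorithm.gcd"
definition lcm_fract :: "'a fract \<Rightarrow> 'a fract \<Rightarrow> 'a fract" where
  "lcm_fract = Euclidean_Algorithm.lcm"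
definition Gcd_fract :: "'a fract set \<Rightarrow> 'a fract" where
  "Gcd_fract = Euclidean_Algorithm.Gcd"
definition Lcm_fract :: "'a fract set \<Rightarrow> 'a fract" where
  "Lcm_fract = Euclidean_Algorithm.Lcm"
instance by standard (simp_all add: gcd_fract_def lcm_fract_def Gcd_fract_def Lcm_fract_def)
end

instance fract :: (idom) field_gcd ..

lemma of_nat_fract: "of_nat n = to_fract (of_nat n)"
  by (induction n) simp_all

instance fract :: ("{idom, ring_char_0}") ring_char_0
  by standard (auto intro!: injI simp: of_nat_fract)

lemma squarefree_imp_coprime_pderiv:
  fixes p :: "'a::{field_gcd, ring_char_0} poly"
  assumes "squarefree p"
  shows "coprime p (pderiv p)"
proof (rule coprimeI)
  fix c assume cp: "c dvd p" and cd: "c dvd pderiv p"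
  show "is_unit c"
  proof (rule ccontr)
    assume "\<not> is_unit c"
    moreover have "c \<noteq> 0" using cp assms by auto
    ultimately obtain q where "q dvd c" and q: "prime q" using prime_divisor_exists by blast
    with cp cd have qp: "q dvd p" and qd: "q dvd pderiv p" by (auto intro: dvd_trans)
    then obtain s where ps: "p = q * s" by (auto elim: dvdE)
    have "pderiv p = pderiv q * s + q * pderiv s" unfolding ps by (simp add: pderiv_mult)
    with qd have "q dvd pderiv q * s" by (metis dvd_add_times_triv_right_iff mult.commute)
    moreover have "\<not> q dvd s"
    proof
      assume "q dvd s"
      then have "q ^ 2 dvd p" unfolding ps by (simp add: power2_eq_square mult_dvd_mono)
      with assms have "is_unit q" by (rule squarefreeD)
      with q show False by simp
    qed
    moreover have "\<not> q dvd pderiv q"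
    proof
      assume dv: "q dvd pderiv q"
      have "degree q > 0"
        using q is_unit_iff_degree[of q] by (auto simp: prime_def prime_elem_def)
      then have "degree (pderiv q) < degree q" by (simp add: degree_pderiv)
      with dv have "pderiv q = 0" using dvd_imp_degree_le by fastforce
      with \<open>degree q > 0\<close> show False by (simp add: pderiv_eq_0_iff)
    qed
    ultimately show False using q by (simp add: prime_dvd_mult_iff)
  qed
qed

lemma fract_poly_clear_denominators:
  fixes w :: "'a::idom fract poly"
  obtains c w' where "c \<noteq> 0" "smult (to_fract c) w = fract_poly w'"
proof (induction w arbitrary: thesis)
  case 0
  show ?case by (rule 0[of 1 0]) simp_all
next
  case (pCons a w)
  obtain e W where e: "e \<noteq> 0" "smult (to_fract e) w = fract_poly W" using pCons.IH by blast
  obtain n m where nm: "a = Fract n m" "m \<noteq> 0" by (cases a) auto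
  have "smult (to_fract (m * e)) (pCons a w) = fract_poly (pCons (n * e) (smult m W))"
    using e(2) nm by (simp add: Fract_conv_to_fract smult_smult[symmetric] map_poly_pCons)
  with nm(2) e(1) show ?case by (intro pCons.prems[of "m * e"]) simp_all
qed

lemma fract_poly_pderiv: "fract_poly (pderiv p) = pderiv (fract_poly p)"
  by (intro poly_eqI) (simp add: coeff_pderiv coeff_map_poly of_nat_fract)

text \<open>Square-freeness over \<open>C(x)\<close> gives a Bezout relation \<open>U P + V P\<^sub>y = c(x) \<noteq> 0\<close> in \<open>C[x,y]\<close>.\<close>

lemma subst_y_pderiv_nonzero:
  fixes P :: "'a::field_char_0 poly poly"
  assumes "squarefree_over_Cx P" and "subst_y a g P = 0"
  shows "subst_y a g (pderiv P) \<noteq> 0"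
proof -
  have "coprime (fract_poly P) (pderiv (fract_poly P))"
    using assms(1) by (intro squarefree_imp_coprime_pderiv) (simp add: squarefree_over_Cx_def)
  then obtain u v where uv: "u * fract_poly P + v * pderiv (fract_poly P) = 1"
    using bezout_coefficients_fst_snd by (metis coprime_iff_gcd_eq_1)
  obtain cu U where cu: "cu \<noteq> 0" "smult (to_fract cu) u = fract_poly U"
    by (rule fract_poly_clear_denominators)
  obtain cv V where cv: "cv \<noteq> 0" "smult (to_fract cv) v = fract_poly V"
    by (rule fract_poly_clear_denominators)
  have "fract_poly [:cu * cv:] = smult (to_fract (cu * cv)) (u * fract_poly P + v * pderiv (fract_poly P))"
    by (simp add: uv map_poly_pCons)
  also have "\<dots> = fract_poly (smult cv U * P + smult cu V * pderiv P)"
    by (simp add: smult_add_right fract_poly_pderiv cu(2)[symmetric] cv(2)[symmetric] mult.commute)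
  finally have "[:cu * cv:] = smult cv U * P + smult cu V * pderiv P"
    by (simp only: fract_poly_eq_iff)
  from arg_cong[OF this, of "subst_y a g"] assms(2)
  have "poly_at a (cu * cv) = subst_y a g (smult cu V) * subst_y a g (pderiv P)" by simp
  with cu(1) cv(1) show ?thesis by auto
qed

lemma map_poly_mult_hom:
  fixes f :: "'a::comm_ring_1 \<Rightarrow> 'b::comm_ring_1"
  assumes "f 0 = 0" and "\<And>x y. f (x + y) = f x + f y" and "\<And>x y. f (x * y) = f x * f y"
  shows "map_poly f (p * q) = map_poly f p * map_poly f q"
proof -
  have add: "map_poly f (a + b) = map_poly f a + map_poly f b" for a b
    by (intro poly_eqI) (simp add: coeff_map_poly assms)
  have smult: "map_poly f (smult c a) = smult (f c) (map_poly f a)" for c a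
    by (intro poly_eqI) (simp add: coeff_map_poly assms)
  show ?thesis
    by (induction p) (simp_all add: add smult map_poly_pCons assms)
qed

lemma poly_map_fps_const_mult:
  fixes p q :: "'a::field poly"
  shows "poly (map_poly fps_const (p * q)) g = poly (map_poly fps_const p) g * poly (map_poly fps_const q) g"
  by (subst map_poly_mult_hom) (simp_all add: fps_const_add fps_const_mult)

lemma poly_map_fps_const_power:
  fixes p :: "'a::field poly"
  shows "poly (map_poly fps_const (p ^ n)) g = poly (map_poly fps_const p) g ^ n"
  by (induction n) (simp_all add: poly_map_fps_const_mult)

lemma poly_map_fps_const_nth_0: "poly (map_poly fps_const p) g $ 0 = poly p (g $ 0)"
  by (induction p) (simp_all add: map_poly_pCons)

text \<open>A nonzero polynomial with constant coefficients can only vanish at a constant series: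
  factor off the root \<open>g(0)\<close>, the cofactor does not vanish at \<open>g\<close>.\<close>

lemma poly_map_fps_const_eq_0_imp_const:
  fixes l :: "'a::field poly"
  assumes "l \<noteq> 0" and "poly (map_poly fps_const l) g = 0"
  shows "g = fps_const (g $ 0)"
proof -
  obtain q where lq: "l = [:- (g $ 0), 1:] ^ order (g $ 0) l * q" and "\<not> [:- (g $ 0), 1:] dvd q"
    using order_decomp[OF assms(1)] by blast
  then have "poly (map_poly fps_const q) g $ 0 \<noteq> 0"
    by (simp add: poly_map_fps_const_nth_0 poly_eq_0_iff_dvd)
  moreover have "poly (map_poly fps_const [:- (g $ 0), 1:]) g = g - fps_const (g $ 0)"
    by (simp add: map_poly_pCons fps_const_neg)
  ultimately have "(g - fps_const (g $ 0)) ^ order (g $ 0) l = 0"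
    using assms(2) by (subst (asm) lq) (auto simp: poly_map_fps_const_mult poly_map_fps_const_power)
  then show ?thesis by simp
qed

lemma subst_y_fps_const: "subst_y a (fps_const c) Q = poly_at a (poly Q [:c:])"
  by (induction Q) (simp_all add: subst_y_pCons)

lemma no_y_divisor_no_constant_solution:
  fixes P :: "'a::field poly poly"
  assumes "no_y_divisor P"
  shows "subst_y a (fps_const c) P \<noteq> 0"
proof
  assume "subst_y a (fps_const c) P = 0"
  then have "poly P [:c:] = 0" by (simp add: subst_y_fps_const)
  then obtain Q where PQ: "P = [:- [:c:], 1:] * Q" by (auto simp: poly_eq_0_iff_dvd elim: dvdE)
  have "map_poly (map_poly to_ac) P
      = map_poly (map_poly to_ac) [:- [:c:], 1:] * map_poly (map_poly to_ac) Q"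
    unfolding PQ
    by (rule map_poly_mult_hom) (auto intro: poly_eqI map_poly_mult_hom simp: coeff_map_poly)
  also have "map_poly (map_poly to_ac) [:- [:c:], 1:] = map_poly (\<lambda>c. [:c:]) [:- to_ac c, 1:]"
    by (simp add: map_poly_pCons)
  finally have "map_poly (\<lambda>c. [:c:]) [:- to_ac c, 1:] dvd map_poly (map_poly to_ac) P" by simp
  moreover have "degree [:- to_ac c, 1:] > 0" by simp
  ultimately show False using assms unfolding no_y_divisor_def by blast
qed

definition lead_y :: "'a::zero poly poly \<Rightarrow> 'a poly poly" where
  "lead_y L = const_y (lead_coeff L)"

lemma subst_y_lead_y_nonzero:
  fixes P L :: "'a::field poly poly"
  assumes "no_y_divisor P" and "subst_y a g P = 0" and "L \<noteq> 0"
  shows "subst_y a g (lead_y L) \<noteq> 0"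
proof
  assume "subst_y a g (lead_y L) = 0"
  then have "g = fps_const (g $ 0)"
    using assms(3) by (intro poly_map_fps_const_eq_0_imp_const[of "lead_coeff L"])
      (simp_all add: lead_y_def subst_y_const_y)
  with assms(2) no_y_divisor_no_constant_solution[OF assms(1)] show False by metis
qed

section \<open>Derivatives of \<open>f \<circ> g\<close>\<close>

definition comp_comb :: "'a::field \<Rightarrow> 'a fps \<Rightarrow> 'a fps \<Rightarrow> nat \<Rightarrow> (nat \<Rightarrow> 'a poly poly) \<Rightarrow> 'a fps" where
  "comp_comb a g f n A = (\<Sum>k<n. subst_y a g (A k) * comp_deriv f g k)"

lemma comp_comb_add: "comp_comb a g f n (\<lambda>k. A k + B k) = comp_comb a g f n A + comp_comb a g f n B"
  by (simp add: comp_comb_def sum.distrib algebra_simps)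

lemma comp_comb_diff: "comp_comb a g f n (\<lambda>k. A k - B k) = comp_comb a g f n A - comp_comb a g f n B"
  by (simp add: comp_comb_def sum_subtractf algebra_simps)

lemma comp_comb_mult_left: "comp_comb a g f n (\<lambda>k. Q * A k) = subst_y a g Q * comp_comb a g f n A"
  by (simp add: comp_comb_def sum_distrib_left mult.assoc)

lemma comp_comb_mult_right: "comp_comb a g f n (\<lambda>k. A k * Q) = comp_comb a g f n A * subst_y a g Q"
  unfolding comp_comb_def sum_distrib_right by (rule sum.cong) (simp_all add: mult_ac)

definition shift_coeffs :: "(nat \<Rightarrow> 'a::zero) \<Rightarrow> nat \<Rightarrow> 'a" where
  "shift_coeffs A k = (if k = 0 then 0 else A (k - 1))"

lemma sum_lessThan_shift:
  fixes A F :: "nat \<Rightarrow> 'b::comm_ring_1"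
  assumes "n \<ge> 1"
  shows "(\<Sum>k<n. A k * F (Suc k)) = (\<Sum>k<n. shift_coeffs A k * F k) + A (n - 1) * F n"
proof -
  obtain m where n: "n = Suc m" using assms by (cases n) auto
  have "(\<Sum>k<Suc m. shift_coeffs A k * F k) = (\<Sum>k<m. A k * F (Suc k))"
    by (subst sum.lessThan_Suc_shift) (simp add: shift_coeffs_def)
  then show ?thesis unfolding n by simp
qed

lemma fps_deriv_comp_comb_along_solution:
  assumes "subst_y a g P = 0" and "n \<ge> 1"
  shows "subst_y a g (pderiv P) * fps_deriv (comp_comb a g f n A)
       = comp_comb a g f n (\<lambda>k. total_deriv P (A k) - pderiv_x P * shift_coeffs A k)
         - subst_y a g (pderiv_x P) * subst_y a g (A (n - 1)) * comp_deriv f g n"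
proof -
  define q where "q = subst_y a g (pderiv_x P)"
  have "subst_y a g (pderiv P) * fps_deriv (subst_y a g (A k) * comp_deriv f g k)
      = subst_y a g (total_deriv P (A k)) * comp_deriv f g k
        - q * (subst_y a g (A k) * comp_deriv f g (Suc k))" for k
  proof -
    have "subst_y a g (pderiv P) * fps_deriv (subst_y a g (A k) * comp_deriv f g k)
        = subst_y a g (pderiv P) * fps_deriv (subst_y a g (A k)) * comp_deriv f g k
          + subst_y a g (A k) * comp_deriv f g (Suc k) * (subst_y a g (pderiv P) * fps_deriv g)"
      by (simp add: fps_deriv_comp_deriv algebra_simps)
    also have "\<dots> = subst_y a g (total_deriv P (A k)) * comp_deriv f g k
        - q * (subst_y a g (A k) * comp_deriv f g (Suc k))"
      unfolding alg_solution_deriv[OF assms(1)] fps_deriv_subst_y_along_solution[OF assms(1)] q_def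
      by (simp add: algebra_simps)
    finally show ?thesis .
  qed
  then have "subst_y a g (pderiv P) * fps_deriv (comp_comb a g f n A)
      = comp_comb a g f n (\<lambda>k. total_deriv P (A k))
        - q * (\<Sum>k<n. subst_y a g (A k) * comp_deriv f g (Suc k))"
    by (simp add: comp_comb_def fps_deriv_sum sum_distrib_left sum_subtractf)
  also have "(\<Sum>k<n. subst_y a g (A k) * comp_deriv f g (Suc k))
      = comp_comb a g f n (shift_coeffs A) + subst_y a g (A (n - 1)) * comp_deriv f g n"
    using sum_lessThan_shift[OF assms(2), of "\<lambda>k. subst_y a g (A k)"]
    by (simp add: comp_comb_def shift_coeffs_def if_distrib cong: if_cong)
  finally show ?thesis
    by (simp add: comp_comb_diff comp_comb_mult_left q_def algebra_simps)
qed

lemma subst_y_lead_y_comp_deriv: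
  assumes "(\<Sum>k\<le>degree L. subst_y a g (const_y (coeff L k)) * comp_deriv f g k) = 0"
  shows "subst_y a g (lead_y L) * comp_deriv f g (degree L)
       = - comp_comb a g f (degree L) (\<lambda>k. const_y (coeff L k))"
  using assms
  by (simp add: lead_y_def comp_comb_def lessThan_Suc_atMost[symmetric] eq_neg_iff_add_eq_0 add.commute)

text \<open>With \<open>l\<close> the leading coefficient of \<open>L\<close> and \<open>F\<^sub>k = f\<^sup>(\<^sup>k\<^sup>) \<circ> g\<close>: the coefficients of
  \<open>P\<^sub>y l \<cdot> d/dx\<close> applied to \<open>\<Sum>\<^sub>k A\<^sub>k(x,g) F\<^sub>k\<close>, after eliminating \<open>F\<^sub>r\<^sub>L\<close> by \<open>L(f) = 0\<close>.\<close>

definition deriv_coeffs :: "'a::idom poly poly \<Rightarrow> 'a poly poly \<Rightarrow> (nat \<Rightarrow> 'a poly poly) \<Rightarrow> nat \<Rightarrow> 'a poly poly" where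
  "deriv_coeffs P L A k =
     lead_y L * (total_deriv P (A k) - pderiv_x P * shift_coeffs A k)
     + pderiv_x P * A (degree L - 1) * const_y (coeff L k)"

lemma fps_deriv_comp_comb:
  fixes g f :: "'a::field fps"
  assumes "subst_y a g P = 0" and "op_solution (g$0) L f" and "degree L \<ge> 1"
  shows "subst_y a g (pderiv P) * subst_y a g (lead_y L) * fps_deriv (comp_comb a g f (degree L) A)
       = comp_comb a g f (degree L) (deriv_coeffs P L A)"
proof -
  define n T where "n = degree L"
    and "T = (\<lambda>k. total_deriv P (A k) - pderiv_x P * shift_coeffs A k)"
  note lead = subst_y_lead_y_comp_deriv[OF op_solution_comp_deriv_relation[OF assms(2)], of a]
  have "subst_y a g (lead_y L) * (subst_y a g (pderiv P) * fps_deriv (comp_comb a g f n A))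
      = comp_comb a g f n (\<lambda>k. lead_y L * T k)
        - subst_y a g (pderiv_x P) * subst_y a g (A (n - 1))
          * (subst_y a g (lead_y L) * comp_deriv f g n)"
    unfolding n_def T_def fps_deriv_comp_comb_along_solution[OF assms(1,3)] comp_comb_mult_left
    by (simp add: algebra_simps)
  also have "\<dots> = comp_comb a g f n (\<lambda>k. lead_y L * T k)
        + comp_comb a g f n (\<lambda>k. pderiv_x P * A (n - 1) * const_y (coeff L k))"
    unfolding n_def lead comp_comb_mult_left by simp
  also have "\<dots> = comp_comb a g f n (deriv_coeffs P L A)"
    unfolding comp_comb_add[symmetric] by (simp add: deriv_coeffs_def[abs_def] T_def n_def)
  finally show ?thesis by (simp add: n_def algebra_simps)
qed

text \<open>\<open>P\<^sub>y(x,g)\<^sup>e\<^sup>-\<^sup>1\<close> times the derivative of \<open>P\<^sub>y(x,g)\<close>; for \<open>e = 1\<close> this presupposes \<open>P\<^sub>y\<^sub>y = 0\<close>.\<close>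

definition pderiv_y_deriv :: "'a::idom poly poly \<Rightarrow> nat \<Rightarrow> 'a poly poly" where
  "pderiv_y_deriv P e = (if e = 1 then pderiv_x (pderiv P) else total_deriv P (pderiv P))"

lemma subst_y_pderiv_y_deriv:
  assumes "subst_y a g P = 0" and "e = 1 \<and> pderiv (pderiv P) = 0 \<or> e = 2"
  shows "subst_y a g (pderiv P) ^ (e - 1) * fps_deriv (subst_y a g (pderiv P))
       = subst_y a g (pderiv_y_deriv P e)"
  using assms(2)
proof
  assume "e = 1 \<and> pderiv (pderiv P) = 0"
  then show ?thesis by (simp add: pderiv_y_deriv_def fps_deriv_subst_y)
next
  assume "e = 2"
  then show ?thesis
    by (simp add: pderiv_y_deriv_def fps_deriv_subst_y_along_solution[OF assms(1)])
qed

lemma fps_deriv_power_scaled: "(x::'a::comm_ring_1 fps) * fps_deriv (x ^ m) = of_nat m * x ^ m * fps_deriv x"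
proof (cases m)
  case (Suc k)
  then have "fps_deriv (x ^ m) = of_nat m * fps_deriv x * x ^ k" and "x ^ m = x * x ^ k"
    using fps_deriv_power'[of x m] by simp_all
  then show ?thesis by (simp add: algebra_simps)
qed simp

lemma fps_deriv_power_mult_power_scaled:
  fixes p l :: "'a::comm_ring_1 fps"
  assumes "e \<ge> 1"
  shows "p ^ e * l * fps_deriv (p ^ m * l ^ n)
       = p ^ m * l ^ n * (of_nat m * l * (p ^ (e - 1) * fps_deriv p) + of_nat n * p ^ (e - 1) * (p * fps_deriv l))"
proof -
  have "p ^ e = p ^ (e - 1) * p" using assms by (cases e) simp_all
  then have "p ^ e * l * fps_deriv (p ^ m * l ^ n)
      = p ^ (e - 1) * l * l ^ n * (p * fps_deriv (p ^ m)) + p ^ (e - 1) * p * p ^ m * (l * fps_deriv (l ^ n))"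
    by (simp add: fps_deriv_mult algebra_simps)
  then show ?thesis by (simp add: fps_deriv_power_scaled algebra_simps)
qed

definition next_coeffs ::
    "'a::idom poly poly \<Rightarrow> 'a poly poly \<Rightarrow> nat \<Rightarrow> nat \<Rightarrow> nat \<Rightarrow> (nat \<Rightarrow> 'a poly poly) \<Rightarrow> nat \<Rightarrow> 'a poly poly" where
  "next_coeffs P L e m n A k =
     pderiv P ^ (e - 1) * deriv_coeffs P L A k
     - (of_nat m * lead_y L * pderiv_y_deriv P e
        + of_nat n * pderiv P ^ (e - 1) * total_deriv P (lead_y L)) * A k"

text \<open>Differentiating \<open>T \<cdot> P\<^sub>y\<^sup>m l\<^sup>n = \<Sum> A\<^sub>k F\<^sub>k\<close> and multiplying by \<open>P\<^sub>y\<^sup>e l\<close> (everything at \<open>(x, g)\<close>,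
  \<open>l\<close> the leading coefficient of \<open>L\<close>) clears all denominators.\<close>

lemma fps_deriv_comp_comb_step:
  fixes g f T :: "'a::field fps"
  assumes sol: "subst_y a g P = 0" and "op_solution (g$0) L f" and "degree L \<ge> 1"
    and e: "e = 1 \<and> pderiv (pderiv P) = 0 \<or> e = 2"
    and T: "T * subst_y a g (pderiv P) ^ m * subst_y a g (lead_y L) ^ n = comp_comb a g f (degree L) A"
  shows "fps_deriv T * subst_y a g (pderiv P) ^ (m + e) * subst_y a g (lead_y L) ^ (n + 1)
       = comp_comb a g f (degree L) (next_coeffs P L e m n A)"
proof -
  define p l E where "p = subst_y a g (pderiv P)" and "l = subst_y a g (lead_y L)"
    and "E = comp_comb a g f (degree L)"
  define S where "S = of_nat m * l * subst_y a g (pderiv_y_deriv P e)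
    + of_nat n * p ^ (e - 1) * subst_y a g (total_deriv P (lead_y L))"
  have e1: "e \<ge> 1" using e by auto
  have pe: "p ^ e = p ^ (e - 1) * p" using e1 by (cases e) simp_all
  have C: "p * l * fps_deriv (E A) = E (deriv_coeffs P L A)"
    unfolding p_def l_def E_def by (rule fps_deriv_comp_comb[OF assms(1-3)])
  have D: "p ^ e * l * fps_deriv (p ^ m * l ^ n) = p ^ m * l ^ n * S"
    unfolding fps_deriv_power_mult_power_scaled[OF e1] S_def p_def l_def
      subst_y_pderiv_y_deriv[OF sol e] fps_deriv_subst_y_along_solution[OF sol] ..
  have T': "T * (p ^ m * l ^ n) = E A" using T by (simp add: p_def l_def E_def mult.assoc)
  have "fps_deriv T * p ^ (m + e) * l ^ (n + 1)
      = p ^ e * l * (fps_deriv (T * (p ^ m * l ^ n)) - T * fps_deriv (p ^ m * l ^ n))"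
    by (simp add: fps_deriv_mult power_add algebra_simps)
  also have "\<dots> = p ^ (e - 1) * (p * l * fps_deriv (E A)) - T * (p ^ e * l * fps_deriv (p ^ m * l ^ n))"
    unfolding T' pe by (simp add: algebra_simps)
  also have "\<dots> = p ^ (e - 1) * E (deriv_coeffs P L A) - E A * S"
    unfolding C D by (simp add: T'[symmetric] mult.assoc)
  also have "\<dots> = E (next_coeffs P L e m n A)"
    unfolding E_def next_coeffs_def comp_comb_diff comp_comb_mult_left comp_comb_mult_right
    by (simp add: S_def p_def l_def)
  finally show ?thesis by (simp add: p_def l_def E_def)
qed

primrec comp_deriv_coeffs :: "'a::idom poly poly \<Rightarrow> 'a poly poly \<Rightarrow> nat \<Rightarrow> nat \<Rightarrow> nat \<Rightarrow> 'a poly poly" where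
  "comp_deriv_coeffs P L e 0 = (\<lambda>k. if k = 0 then 1 else 0)"
| "comp_deriv_coeffs P L e (Suc i) = next_coeffs P L e (e * i) i (comp_deriv_coeffs P L e i)"

definition comp_denom :: "'a::idom poly poly \<Rightarrow> 'a poly poly \<Rightarrow> nat \<Rightarrow> 'a poly poly" where
  "comp_denom P L e = pderiv P ^ e * lead_y L"

lemma comp_deriv_coeffs_represent:
  fixes g f :: "'a::field fps"
  assumes "subst_y a g P = 0" and "op_solution (g$0) L f" and "degree L \<ge> 1"
    and "e = 1 \<and> pderiv (pderiv P) = 0 \<or> e = 2"
  shows "(fps_deriv ^^ i) (comp_at f g) * subst_y a g (comp_denom P L e) ^ i
       = comp_comb a g f (degree L) (comp_deriv_coeffs P L e i)"
proof (induction i)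
  case 0
  have "comp_comb a g f (degree L) (comp_deriv_coeffs P L e 0)
      = (\<Sum>k<degree L. if k = 0 then comp_deriv f g k else 0)"
    unfolding comp_comb_def by (intro sum.cong) auto
  also have "\<dots> = comp_deriv f g 0" using assms(3) by simp
  finally show ?case by (simp add: comp_deriv_0)
next
  case (Suc i)
  then have "(fps_deriv ^^ i) (comp_at f g) * subst_y a g (pderiv P) ^ (e * i)
      * subst_y a g (lead_y L) ^ i = comp_comb a g f (degree L) (comp_deriv_coeffs P L e i)"
    by (simp add: comp_denom_def power_mult_distrib power_mult mult.assoc)
  moreover have "subst_y a g (comp_denom P L e) ^ Suc i
      = subst_y a g (pderiv P) ^ (e * i + e) * subst_y a g (lead_y L) ^ (i + 1)"
    by (simp add: comp_denom_def power_mult_distrib power_add mult.commute flip: power_mult)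
  ultimately show ?case
    using fps_deriv_comp_comb_step[OF assms] by (simp add: mult.assoc)
qed

section \<open>Bidegrees\<close>

definition bideg_le :: "'a::zero poly poly \<Rightarrow> nat \<Rightarrow> nat \<Rightarrow> bool" where
  "bideg_le Q m n \<longleftrightarrow> degree Q \<le> n \<and> (\<forall>k. degree (coeff Q k) \<le> m)"

lemma bideg_le_mono: "bideg_le Q m n \<Longrightarrow> m \<le> m' \<Longrightarrow> n \<le> n' \<Longrightarrow> bideg_le Q m' n'"
  unfolding bideg_le_def using order_trans by blast

lemma bideg_le_0 [simp]: "bideg_le 0 m n"
  by (simp add: bideg_le_def)

lemma bideg_le_1 [simp]: "bideg_le 1 m n"
  by (simp add: bideg_le_def coeff_1)

lemma bideg_le_of_nat [simp]: "bideg_le (of_nat k :: 'a::idom poly poly) m n"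
  by (simp add: bideg_le_def of_nat_poly coeff_pCons split: nat.split)

lemma bideg_le_add: "bideg_le Q m n \<Longrightarrow> bideg_le R m n \<Longrightarrow> bideg_le (Q + R) m n"
  by (simp add: bideg_le_def degree_add_le)

lemma bideg_le_diff:
  "bideg_le Q m n \<Longrightarrow> bideg_le R m n \<Longrightarrow> bideg_le (Q - R :: 'a::ab_group_add poly poly) m n"
  by (simp add: bideg_le_def degree_diff_le)

lemma bideg_le_mult:
  fixes Q R :: "'a::comm_semiring_1 poly poly"
  assumes "bideg_le Q m n" and "bideg_le R m' n'"
  shows "bideg_le (Q * R) (m + m') (n + n')"
  unfolding bideg_le_def
proof
  show "degree (Q * R) \<le> n + n'"
    using assms degree_mult_le[of Q R] unfolding bideg_le_def by linarith
  show "\<forall>k. degree (coeff (Q * R) k) \<le> m + m'"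
    unfolding coeff_mult
  proof (intro allI degree_sum_le)
    fix k i
    show "degree (coeff Q i * coeff R (k - i)) \<le> m + m'"
      using assms degree_mult_le[of "coeff Q i" "coeff R (k - i)"] unfolding bideg_le_def
      by (meson add_le_mono order_trans)
  qed simp
qed

lemma bideg_le_mult_mono:
  fixes Q R :: "'a::comm_semiring_1 poly poly"
  shows "bideg_le Q m n \<Longrightarrow> bideg_le R m' n' \<Longrightarrow> m + m' \<le> M \<Longrightarrow> n + n' \<le> N \<Longrightarrow> bideg_le (Q * R) M N"
  using bideg_le_mult bideg_le_mono by blast

lemma bideg_le_sum: "(\<And>i. i \<in> I \<Longrightarrow> bideg_le (F i) m n) \<Longrightarrow> bideg_le (sum F I) m n"
  by (induction I rule: infinite_finite_induct) (auto intro: bideg_le_add)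

lemma bideg_le_power:
  "bideg_le Q m n \<Longrightarrow> bideg_le (Q ^ k :: 'a::comm_semiring_1 poly poly) (k * m) (k * n)"
  by (induction k) (auto intro: bideg_le_mult)

lemma degree_pderiv_le: "degree (pderiv p) \<le> degree p - 1"
  by (rule degree_le) (auto simp: coeff_pderiv coeff_eq_0)

lemma bideg_le_pderiv:
  fixes Q :: "'a::idom poly poly"
  assumes "bideg_le Q m n"
  shows "bideg_le (pderiv Q) m (n - 1)"
  unfolding bideg_le_def
proof
  show "degree (pderiv Q) \<le> n - 1"
    using assms degree_pderiv_le[of Q] by (simp add: bideg_le_def) linarith
  show "\<forall>k. degree (coeff (pderiv Q) k) \<le> m"
    using assms degree_mult_le[of "of_nat _" "coeff Q _"]
    by (auto simp: bideg_le_def coeff_pderiv of_nat_poly)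
qed

lemma bideg_le_pderiv_x:
  fixes Q :: "'a::idom poly poly"
  shows "bideg_le Q m n \<Longrightarrow> bideg_le (pderiv_x Q) m n"
proof -
  have "degree (pderiv c) \<le> degree c" for c :: "'a poly"
    using degree_pderiv_le[of c] by simp
  then show "bideg_le Q m n \<Longrightarrow> bideg_le (pderiv_x Q) m n"
    unfolding bideg_le_def pderiv_x_def
    by (auto simp: coeff_map_poly intro: order_trans order_trans[OF map_poly_degree_leq])
qed

lemma bideg_le_total_deriv:
  fixes P Q :: "'a::idom poly poly"
  assumes "bideg_le P m n" and "bideg_le Q m' n'"
  shows "bideg_le (total_deriv P Q) (m + m') (n + n')"
  unfolding total_deriv_def
  by (intro bideg_le_diff bideg_le_mult_mono[OF bideg_le_pderiv[OF assms(1)] bideg_le_pderiv_x[OF assms(2)]]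
      bideg_le_mult_mono[OF bideg_le_pderiv_x[OF assms(1)] bideg_le_pderiv[OF assms(2)]]) auto

lemma bideg_le_const_y: "degree l \<le> n \<Longrightarrow> bideg_le (const_y l) 0 n"
  by (simp add: bideg_le_def const_y_def degree_map_poly coeff_map_poly)

lemma bideg_le_const: "degree c \<le> m \<Longrightarrow> bideg_le [:c:] m 0"
  by (simp add: bideg_le_def coeff_pCons split: nat.split)

lemma bideg_le_deg_x_deg_y: "bideg_le P (deg_x P) (deg_y P)"
  unfolding bideg_le_def deg_y_def deg_x_def
proof safe
  fix k
  show "degree (coeff P k) \<le> Max {degree (coeff P j) |j. j \<le> degree P}"
    by (cases "k \<le> degree P") (auto intro: Max_ge simp: coeff_eq_0)
qed

lemma bideg_le_lead_y: "\<forall>k. degree (coeff L k) \<le> dL \<Longrightarrow> bideg_le (lead_y L) 0 dL"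
  unfolding lead_y_def by (rule bideg_le_const_y) simp

lemma bideg_le_deriv_coeffs:
  fixes P L :: "'a::idom poly poly"
  assumes P: "bideg_le P dP rP" and L: "\<forall>k. degree (coeff L k) \<le> dL"
    and A: "\<And>k. bideg_le (A k) m n"
  shows "bideg_le (deriv_coeffs P L A k) (m + dP) (n + rP + dL)"
proof -
  have shift: "bideg_le (shift_coeffs A k) m n"
    using A by (simp add: shift_coeffs_def)
  have "bideg_le (total_deriv P (A k) - pderiv_x P * shift_coeffs A k) (m + dP) (n + rP)"
    by (intro bideg_le_diff bideg_le_mult_mono[OF bideg_le_pderiv_x[OF P] shift]
        bideg_le_mono[OF bideg_le_total_deriv[OF P A]]) auto
  then have "bideg_le (lead_y L * (total_deriv P (A k) - pderiv_x P * shift_coeffs A k))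
      (m + dP) (n + rP + dL)"
    by (rule bideg_le_mult_mono[OF bideg_le_lead_y[OF L]]) auto
  moreover have "bideg_le (const_y (coeff L k)) 0 dL"
    using L by (intro bideg_le_const_y) auto
  then have "bideg_le (pderiv_x P * A (degree L - 1) * const_y (coeff L k)) (m + dP) (n + rP + dL)"
    by (rule bideg_le_mult_mono[OF bideg_le_mult[OF bideg_le_pderiv_x[OF P] A]]) auto
  ultimately show ?thesis
    unfolding deriv_coeffs_def by (rule bideg_le_add)
qed

lemma bideg_le_pderiv_y_deriv:
  fixes P :: "'a::idom poly poly"
  assumes P: "bideg_le P dP rP" and "e \<ge> 1"
  shows "bideg_le (pderiv_y_deriv P e) (e * dP) ((e - 1) * (rP - 1) + rP)"
proof (cases "e = 1")
  case True
  then show ?thesis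
    using bideg_le_pderiv_x[OF bideg_le_pderiv[OF P]]
    by (auto simp: pderiv_y_deriv_def intro: bideg_le_mono)
next
  case False
  with assms(2) have "e \<ge> 2" by simp
  then have "dP + dP \<le> e * dP" and "1 * (rP - 1) \<le> (e - 1) * (rP - 1)"
    by (simp add: mult_2[symmetric] mult_le_mono1, intro mult_le_mono1) simp
  then have "dP + dP \<le> e * dP" and "rP + (rP - 1) \<le> (e - 1) * (rP - 1) + rP"
    by linarith+
  with False show ?thesis
    using bideg_le_total_deriv[OF P bideg_le_pderiv[OF P]]
    by (auto simp: pderiv_y_deriv_def intro: bideg_le_mono)
qed

lemma bideg_le_next_coeffs:
  fixes P L :: "'a::idom poly poly"
  assumes P: "bideg_le P dP rP" and L: "\<forall>k. degree (coeff L k) \<le> dL"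
    and A: "\<And>k. bideg_le (A k) m n" and "e \<ge> 1"
  shows "bideg_le (next_coeffs P L e i j A k) (m + e * dP) (n + ((e - 1) * (rP - 1) + rP + dL))"
proof -
  have pe: "bideg_le (pderiv P ^ (e - 1)) ((e - 1) * dP) ((e - 1) * (rP - 1))"
    by (rule bideg_le_power[OF bideg_le_pderiv[OF P]])
  have ed: "(e - 1) * dP + dP = e * dP" using \<open>e \<ge> 1\<close> by (simp add: mult_eq_if)
  have "bideg_le (pderiv P ^ (e - 1) * deriv_coeffs P L A k)
      (m + e * dP) (n + ((e - 1) * (rP - 1) + rP + dL))"
    using ed by (intro bideg_le_mult_mono[OF pe bideg_le_deriv_coeffs[OF P L A]]) auto
  moreover have "bideg_le (of_nat i * lead_y L * pderiv_y_deriv P e) (e * dP) ((e - 1) * (rP - 1) + rP + dL)"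
    by (intro bideg_le_mult_mono[OF bideg_le_mult[OF bideg_le_of_nat[of _ 0 0] bideg_le_lead_y[OF L]]
        bideg_le_pderiv_y_deriv[OF P \<open>e \<ge> 1\<close>]]) auto
  moreover have "bideg_le (of_nat j * pderiv P ^ (e - 1) * total_deriv P (lead_y L))
      (e * dP) ((e - 1) * (rP - 1) + rP + dL)"
    using ed by (intro bideg_le_mult_mono[OF bideg_le_mult[OF bideg_le_of_nat[of _ 0 0] pe]
        bideg_le_total_deriv[OF P bideg_le_lead_y[OF L]]]) auto
  ultimately show ?thesis
    unfolding next_coeffs_def
    by (intro bideg_le_diff bideg_le_mult_mono[OF bideg_le_add A]) (auto simp: add.commute)
qed

lemma bideg_le_comp_deriv_coeffs:
  fixes P L :: "'a::idom poly poly"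
  assumes "bideg_le P dP rP" and "\<forall>k. degree (coeff L k) \<le> dL" and "e \<ge> 1"
  shows "bideg_le (comp_deriv_coeffs P L e i k) (i * (e * dP)) (i * ((e - 1) * (rP - 1) + rP + dL))"
proof (induction i arbitrary: k)
  case (Suc i)
  show ?case
    using bideg_le_next_coeffs[OF assms(1,2) Suc.IH assms(3)] by (simp add: add.commute)
qed simp

lemma bideg_le_comp_denom:
  fixes P L :: "'a::idom poly poly"
  assumes "bideg_le P dP rP" and "\<forall>k. degree (coeff L k) \<le> dL"
  shows "bideg_le (comp_denom P L e) (e * dP) ((e - 1) * (rP - 1) + rP + dL)"
proof -
  have "e * (rP - 1) \<le> (e - 1) * (rP - 1) + rP"
    by (cases e) simp_all
  then show ?thesis
    unfolding comp_denom_def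
    by (intro bideg_le_mult_mono[OF bideg_le_power[OF bideg_le_pderiv[OF assms(1)]]
        bideg_le_lead_y[OF assms(2)]]) auto
qed

section \<open>Homogeneous linear systems\<close>

lemma homogeneous_system_pivot_extension:
  fixes A :: "'e \<Rightarrow> 'u \<Rightarrow> 'a::field"
  assumes "finite U" and "u0 \<in> U" and "A e0 u0 \<noteq> 0"
    and "\<forall>e\<in>E. (\<Sum>u\<in>U - {u0}. (A e u - A e u0 * A e0 u / A e0 u0) * c u) = 0"
  defines "c' \<equiv> c(u0 := - (\<Sum>u\<in>U - {u0}. A e0 u * c u) / A e0 u0)"
  shows "\<forall>e\<in>insert e0 E. (\<Sum>u\<in>U. A e u * c' u) = 0"
proof -
  have split: "(\<Sum>u\<in>U. B u * c' u) = B u0 * c' u0 + (\<Sum>u\<in>U - {u0}. B u * c u)" for B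
  proof -
    have "(\<Sum>u\<in>U. B u * c' u) = B u0 * c' u0 + (\<Sum>u\<in>U - {u0}. B u * c' u)"
      using assms(1,2) by (rule sum.remove)
    also have "(\<Sum>u\<in>U - {u0}. B u * c' u) = (\<Sum>u\<in>U - {u0}. B u * c u)"
      by (rule sum.cong) (auto simp: c'_def)
    finally show ?thesis .
  qed
  have "(\<Sum>u\<in>U. A e u * c' u)
      = (\<Sum>u\<in>U - {u0}. (A e u - A e u0 * A e0 u / A e0 u0) * c u)" for e
    unfolding split using assms(3)
    by (simp add: c'_def algebra_simps sum_subtractf sum_distrib_left sum_divide_distrib)
  with assms(3,4) show ?thesis
    by (auto simp: split c'_def)
qed

lemma homogeneous_system_nontrivial_solution:
  fixes A :: "'e \<Rightarrow> 'u \<Rightarrow> 'a::field"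
  assumes "finite E" and "finite U" and "card E < card U"
  shows "\<exists>c. (\<exists>u\<in>U. c u \<noteq> 0) \<and> (\<forall>e\<in>E. (\<Sum>u\<in>U. A e u * c u) = 0)"
  using assms
proof (induction E arbitrary: U A rule: finite_induct)
  case empty
  then obtain u0 where "u0 \<in> U" by fastforce
  then show ?case by (intro exI[of _ "\<lambda>u. if u = u0 then 1 else 0"]) auto
next
  case (insert e0 E)
  show ?case
  proof (cases "\<forall>u\<in>U. A e0 u = 0")
    case True
    have "card E < card U" using insert by simp
    with insert.IH[OF insert.prems(1)] obtain c
      where "\<exists>u\<in>U. c u \<noteq> 0" "\<forall>e\<in>E. (\<Sum>u\<in>U. A e u * c u) = 0"
      by blast
    with True show ?thesis by (intro exI[of _ c]) auto
  next
    case False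
    then obtain u0 where u0: "u0 \<in> U" "A e0 u0 \<noteq> 0" by blast
    have "card E < card (U - {u0})" using insert u0 by simp
    moreover have "finite (U - {u0})" using insert.prems(1) by simp
    ultimately obtain c where
      c: "\<exists>u\<in>U - {u0}. c u \<noteq> 0"
      and sys: "\<forall>e\<in>E. (\<Sum>u\<in>U - {u0}. (A e u - A e u0 * A e0 u / A e0 u0) * c u) = 0"
      using insert.IH[of "U - {u0}" "\<lambda>e u. A e u - A e u0 * A e0 u / A e0 u0"] by blast
    define c' where "c' = c(u0 := - (\<Sum>u\<in>U - {u0}. A e0 u * c u) / A e0 u0)"
    have "\<forall>e\<in>insert e0 E. (\<Sum>u\<in>U. A e u * c' u) = 0"
      unfolding c'_def by (rule homogeneous_system_pivot_extension[OF insert.prems(1) u0 sys])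
    moreover have "\<exists>u\<in>U. c' u \<noteq> 0" using c by (auto simp: c'_def)
    ultimately show ?thesis by blast
  qed
qed

lemma linear_functional_expansion:
  fixes \<Phi> :: "('u \<Rightarrow> 'a::field) \<Rightarrow> 'a"
  assumes "finite U"
    and add: "\<And>c c'. \<Phi> (\<lambda>u. c u + c' u) = \<Phi> c + \<Phi> c'"
    and scale: "\<And>s c. \<Phi> (\<lambda>u. s * c u) = s * \<Phi> c"
    and local: "\<And>c c'. \<forall>u\<in>U. c u = c' u \<Longrightarrow> \<Phi> c = \<Phi> c'"
  shows "\<Phi> c = (\<Sum>u\<in>U. c u * \<Phi> (\<lambda>v. if v = u then 1 else 0))"
proof -
  have sum: "\<Phi> (\<lambda>v. \<Sum>u\<in>S. F u v) = (\<Sum>u\<in>S. \<Phi> (F u))" if "finite S" for S and F :: "'u \<Rightarrow> 'u \<Rightarrow> 'a"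
    using that
  proof (induction S rule: finite_induct)
    case empty
    show ?case using scale[of 0 "\<lambda>v. 0"] by simp
  next
    case (insert x S)
    then show ?case using add[of "F x"] by simp
  qed
  have "\<Phi> c = \<Phi> (\<lambda>v. \<Sum>u\<in>U. c u * (if v = u then 1 else 0))"
    by (rule local) (simp add: assms(1) if_distrib sum.delta' cong: if_cong)
  also have "\<dots> = (\<Sum>u\<in>U. c u * \<Phi> (\<lambda>v. if v = u then 1 else 0))"
    using sum[OF assms(1)] scale by simp
  finally show ?thesis .
qed

lemma bideg_le_eq_0I:
  assumes "bideg_le Q m n" and "\<And>i j. i \<le> m \<Longrightarrow> j \<le> n \<Longrightarrow> coeff (coeff Q j) i = 0"
  shows "Q = 0"
proof (intro poly_eqI)
  fix j i
  have "degree Q \<le> n" and "degree (coeff Q j) \<le> m" using assms(1) by (simp_all add: bideg_le_def)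
  then consider "i \<le> m" "j \<le> n" | "degree (coeff Q j) < i" | "degree Q < j" by linarith
  then show "coeff (coeff Q j) i = coeff (coeff 0 j) i"
    by cases (simp_all add: assms(2) coeff_eq_0)
qed

lemma linear_bideg_system_nontrivial_solution:
  fixes \<Phi> :: "('u \<Rightarrow> 'a::field) \<Rightarrow> nat \<Rightarrow> 'a poly poly"
  assumes "finite U"
    and add: "\<And>c c' a. a < N \<Longrightarrow> \<Phi> (\<lambda>u. c u + c' u) a = \<Phi> c a + \<Phi> c' a"
    and scale: "\<And>s c a. a < N \<Longrightarrow> \<Phi> (\<lambda>u. s * c u) a = smult [:s:] (\<Phi> c a)"
    and local: "\<And>c c' a. a < N \<Longrightarrow> \<forall>u\<in>U. c u = c' u \<Longrightarrow> \<Phi> c a = \<Phi> c' a"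
    and bound: "\<And>c a. a < N \<Longrightarrow> bideg_le (\<Phi> c a) m n"
    and count: "N * ((m + 1) * (n + 1)) < card U"
  shows "\<exists>c. (\<exists>u\<in>U. c u \<noteq> 0) \<and> (\<forall>a<N. \<Phi> c a = 0)"
proof -
  define E where "E = {..<N} \<times> {..m} \<times> {..n}"
  define A where "A = (\<lambda>(a, i, j) u. coeff (coeff (\<Phi> (\<lambda>v. if v = u then 1 else 0) a) j) i)"
  have "finite E" and "card E < card U" using count by (simp_all add: E_def card_cartesian_product)
  then obtain c where c: "\<exists>u\<in>U. c u \<noteq> 0" and sys: "\<forall>e\<in>E. (\<Sum>u\<in>U. A e u * c u) = 0"
    using homogeneous_system_nontrivial_solution[OF _ assms(1), of E A] by blast
  have "coeff (coeff (\<Phi> c a) j) i = (\<Sum>u\<in>U. A (a, i, j) u * c u)" if a: "a < N" for a i j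
  proof -
    have "coeff (coeff (\<Phi> c a) j) i
        = (\<Sum>u\<in>U. c u * coeff (coeff (\<Phi> (\<lambda>v. if v = u then 1 else 0) a) j) i)"
    proof (rule linear_functional_expansion[OF assms(1), where \<Phi> = "\<lambda>c. coeff (coeff (\<Phi> c a) j) i"])
      fix c c' :: "'u \<Rightarrow> 'a"
      show "coeff (coeff (\<Phi> (\<lambda>u. c u + c' u) a) j) i
          = coeff (coeff (\<Phi> c a) j) i + coeff (coeff (\<Phi> c' a) j) i"
        by (simp add: add[OF a])
      show "\<forall>u\<in>U. c u = c' u \<Longrightarrow> coeff (coeff (\<Phi> c a) j) i = coeff (coeff (\<Phi> c' a) j) i"
        by (simp only: local[OF a, of c c'])
    next
      fix s and c :: "'u \<Rightarrow> 'a"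
      show "coeff (coeff (\<Phi> (\<lambda>u. s * c u) a) j) i = s * coeff (coeff (\<Phi> c a) j) i"
        by (simp add: scale[OF a])
    qed
    then show ?thesis by (simp add: A_def mult.commute)
  qed
  with sys have "\<Phi> c a = 0" if "a < N" for a
    using that by (intro bideg_le_eq_0I[OF bound[OF that]]) (auto simp: E_def)
  with c show ?thesis by blast
qed

section \<open>The ansatz\<close>

text \<open>Unknowns of the ansatz: \<open>Inl (i, j)\<close> is the coefficient of \<open>x\<^sup>j \<partial>\<^sup>i\<close> in \<open>M\<close>,
  \<open>Inr (k, i, j)\<close> the coefficient of \<open>x\<^sup>i y\<^sup>j\<close> in the \<open>k\<close>-th quotient by \<open>P\<close>.\<close>

type_synonym ansatz_var = "(nat \<times> nat) + (nat \<times> nat \<times> nat)"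

definition ansatz_vars :: "nat \<Rightarrow> nat \<Rightarrow> nat \<Rightarrow> nat \<Rightarrow> nat \<Rightarrow> ansatz_var set" where
  "ansatz_vars r d N m n = Inl ` ({..r} \<times> {..d}) \<union> Inr ` ({..<N} \<times> {..m} \<times> {..n})"

definition ansatz_coeff :: "nat \<Rightarrow> (ansatz_var \<Rightarrow> 'a::comm_monoid_add) \<Rightarrow> nat \<Rightarrow> 'a poly" where
  "ansatz_coeff d c i = (\<Sum>j\<le>d. monom (c (Inl (i, j))) j)"

definition ansatz_op :: "nat \<Rightarrow> nat \<Rightarrow> (ansatz_var \<Rightarrow> 'a::comm_monoid_add) \<Rightarrow> 'a diffop" where
  "ansatz_op r d c = (\<Sum>i\<le>r. monom (ansatz_coeff d c i) i)"

definition ansatz_quot :: "nat \<Rightarrow> nat \<Rightarrow> (ansatz_var \<Rightarrow> 'a::comm_monoid_add) \<Rightarrow> nat \<Rightarrow> 'a poly poly" where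
  "ansatz_quot m n c k = (\<Sum>i\<le>m. \<Sum>j\<le>n. monom (monom (c (Inr (k, i, j))) i) j)"

definition ansatz_numer ::
    "'a::idom poly poly \<Rightarrow> 'a poly poly \<Rightarrow> nat \<Rightarrow> nat \<Rightarrow> nat \<Rightarrow> (ansatz_var \<Rightarrow> 'a) \<Rightarrow> nat \<Rightarrow> 'a poly poly" where
  "ansatz_numer P L e r d c k =
     (\<Sum>i\<le>r. [:ansatz_coeff d c i:] * comp_denom P L e ^ (r - i) * comp_deriv_coeffs P L e i k)"

lemma card_ansatz_vars: "card (ansatz_vars r d N m n) = (r + 1) * (d + 1) + N * ((m + 1) * (n + 1))"
proof -
  have "card (ansatz_vars r d N m n)
      = card (Inl ` ({..r} \<times> {..d}) :: ansatz_var set) + card (Inr ` ({..<N} \<times> {..m} \<times> {..n}) :: ansatz_var set)"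
    unfolding ansatz_vars_def by (rule card_Un_disjoint) auto
  then show ?thesis by (simp add: card_image card_cartesian_product)
qed

lemma coeff_ansatz_coeff: "coeff (ansatz_coeff d c i) j = (if j \<le> d then c (Inl (i, j)) else 0)"
  by (simp add: ansatz_coeff_def coeff_sum coeff_monom)

lemma degree_ansatz_coeff: "degree (ansatz_coeff d c i) \<le> d"
  by (rule degree_le) (simp add: coeff_ansatz_coeff)

lemma coeff_ansatz_op: "coeff (ansatz_op r d c) i = (if i \<le> r then ansatz_coeff d c i else 0)"
  by (simp add: ansatz_op_def coeff_sum coeff_monom)

lemma op_order_ansatz_op: "op_order (ansatz_op r d c) \<le> r"
  unfolding op_order_def by (rule degree_le) (simp add: coeff_ansatz_op)

lemma op_degree_ansatz_op: "op_degree (ansatz_op r d c) \<le> d"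
  unfolding op_degree_def by (rule Max.boundedI) (auto simp: coeff_ansatz_op degree_ansatz_coeff)

lemma apply_op_ansatz_op:
  "apply_op a (ansatz_op r d c) h = (\<Sum>i\<le>r. poly_at a (ansatz_coeff d c i) * (fps_deriv ^^ i) h)"
proof -
  have "apply_op a (ansatz_op r d c) h = (\<Sum>i\<le>r. poly_at a (coeff (ansatz_op r d c) i) * (fps_deriv ^^ i) h)"
    unfolding apply_op_def using op_order_ansatz_op[of r d c]
    by (intro sum.mono_neutral_left) (auto simp: op_order_def coeff_eq_0)
  then show ?thesis by (simp add: coeff_ansatz_op)
qed

lemma coeff_ansatz_quot:
  "coeff (coeff (ansatz_quot m n c k) j) i = (if i \<le> m \<and> j \<le> n then c (Inr (k, i, j)) else 0)"
  by (cases "j \<le> n") (simp_all add: ansatz_quot_def coeff_sum coeff_monom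
      if_distrib[of "\<lambda>p. coeff p i"] sum.delta cong: if_cong)

lemma bideg_le_ansatz_quot: "bideg_le (ansatz_quot m n c k) m n"
  unfolding bideg_le_def
proof (intro conjI allI)
  show "degree (ansatz_quot m n c k) \<le> n"
    by (rule degree_le) (auto simp: poly_eq_iff coeff_ansatz_quot)
  show "degree (coeff (ansatz_quot m n c k) j) \<le> m" for j
    by (rule degree_le) (auto simp: coeff_ansatz_quot)
qed

lemma smult_sum_right: "smult c (\<Sum>x\<in>A. f x) = (\<Sum>x\<in>A. smult c (f x))"
  by (induction A rule: infinite_finite_induct) (simp_all add: smult_add_right)

lemma ansatz_coeff_add: "ansatz_coeff d (\<lambda>u. c u + c' u) i = ansatz_coeff d c i + ansatz_coeff d c' i"
  by (simp add: ansatz_coeff_def sum.distrib add_monom[symmetric])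

lemma ansatz_coeff_scale: "ansatz_coeff d (\<lambda>u. s * c u) i = smult s (ansatz_coeff d c i)"
  by (simp add: ansatz_coeff_def smult_sum_right smult_monom)

lemma ansatz_quot_add: "ansatz_quot m n (\<lambda>u. c u + c' u) k = ansatz_quot m n c k + ansatz_quot m n c' k"
  by (simp add: ansatz_quot_def sum.distrib add_monom[symmetric])

lemma ansatz_quot_scale: "ansatz_quot m n (\<lambda>u. s * c u) k = smult [:s:] (ansatz_quot m n c k)"
  by (simp add: ansatz_quot_def smult_sum_right smult_monom)

lemma ansatz_numer_add:
  "ansatz_numer P L e r d (\<lambda>u. c u + c' u) k = ansatz_numer P L e r d c k + ansatz_numer P L e r d c' k"
  by (simp add: ansatz_numer_def ansatz_coeff_add sum.distrib[symmetric] smult_add_left distrib_right)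

lemma ansatz_numer_scale:
  "ansatz_numer P L e r d (\<lambda>u. s * c u) k = smult [:s:] (ansatz_numer P L e r d c k)"
  by (simp add: ansatz_numer_def ansatz_coeff_scale smult_sum_right)

lemma ansatz_eqs_local:
  assumes "\<forall>u\<in>ansatz_vars r d N m n. c u = c' u" and "k < N"
  shows "ansatz_numer P L e r d c k = ansatz_numer P L e r d c' k"
    and "ansatz_quot m n c k = ansatz_quot m n c' k"
proof -
  have "ansatz_coeff d c i = ansatz_coeff d c' i" if "i \<le> r" for i
    unfolding ansatz_coeff_def using assms that by (intro sum.cong) (auto simp: ansatz_vars_def)
  then show "ansatz_numer P L e r d c k = ansatz_numer P L e r d c' k"
    unfolding ansatz_numer_def by (intro sum.cong) auto
  show "ansatz_quot m n c k = ansatz_quot m n c' k"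
    unfolding ansatz_quot_def using assms by (intro sum.cong) (auto simp: ansatz_vars_def)
qed

lemma bideg_le_ansatz_numer:
  fixes P L :: "'a::idom poly poly"
  assumes "bideg_le P dP rP" and "\<forall>k. degree (coeff L k) \<le> dL" and "e \<ge> 1"
  shows "bideg_le (ansatz_numer P L e r d c k) (d + r * (e * dP)) (r * ((e - 1) * (rP - 1) + rP + dL))"
  unfolding ansatz_numer_def
proof (rule bideg_le_sum)
  fix i assume "i \<in> {..r}"
  then have split: "(r - i) * x + i * x = r * x" for x :: nat
    by (simp add: add_mult_distrib[symmetric])
  show "bideg_le ([:ansatz_coeff d c i:] * comp_denom P L e ^ (r - i) * comp_deriv_coeffs P L e i k)
      (d + r * (e * dP)) (r * ((e - 1) * (rP - 1) + rP + dL))"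
    by (rule bideg_le_mult_mono[OF bideg_le_mult[OF bideg_le_const[OF degree_ansatz_coeff]
          bideg_le_power[OF bideg_le_comp_denom[OF assms(1,2)]]]
          bideg_le_comp_deriv_coeffs[OF assms]]) (simp_all add: add.assoc split)
qed

lemma ansatz_solution_exists:
  fixes P L :: "'a::field poly poly" and r d N e dP rP dL :: nat
  assumes P: "bideg_le P dP rP" and L: "\<forall>k. degree (coeff L k) \<le> dL" and "e \<ge> 1"
  defines "Dx \<equiv> d + r * (e * dP)" and "Dy \<equiv> r * ((e - 1) * (rP - 1) + rP + dL)"
  assumes "dP \<le> Dx" and "rP \<le> Dy"
    and count: "N * ((Dx + 1) * (Dy + 1)) < (r + 1) * (d + 1) + N * ((Dx - dP + 1) * (Dy - rP + 1))"
  shows "\<exists>c. (\<exists>u\<in>ansatz_vars r d N (Dx - dP) (Dy - rP). c u \<noteq> 0) \<and>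
      (\<forall>k<N. ansatz_numer P L e r d c k = P * ansatz_quot (Dx - dP) (Dy - rP) c k)"
proof -
  define U where "U = ansatz_vars r d N (Dx - dP) (Dy - rP)"
  define \<Phi> where "\<Phi> c k = ansatz_numer P L e r d c k - P * ansatz_quot (Dx - dP) (Dy - rP) c k" for c k
  have "finite U" by (simp add: U_def ansatz_vars_def)
  moreover have "\<Phi> (\<lambda>u. c u + c' u) k = \<Phi> c k + \<Phi> c' k" for c c' k
    by (simp add: \<Phi>_def ansatz_numer_add ansatz_quot_add algebra_simps)
  moreover have "\<Phi> (\<lambda>u. s * c u) k = smult [:s:] (\<Phi> c k)" for s c k
    by (simp add: \<Phi>_def ansatz_numer_scale ansatz_quot_scale smult_diff_right)
  moreover have "\<Phi> c k = \<Phi> c' k" if "k < N" and "\<forall>u\<in>U. c u = c' u" for c c' k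
    using that by (simp add: \<Phi>_def U_def ansatz_eqs_local)
  moreover have "bideg_le (\<Phi> c k) Dx Dy" for c k
  proof -
    have "bideg_le (P * ansatz_quot (Dx - dP) (Dy - rP) c k) Dx Dy"
      using \<open>dP \<le> Dx\<close> \<open>rP \<le> Dy\<close> by (intro bideg_le_mult_mono[OF P bideg_le_ansatz_quot]) auto
    with bideg_le_ansatz_numer[OF P L \<open>e \<ge> 1\<close>] show ?thesis
      unfolding \<Phi>_def Dx_def Dy_def by (intro bideg_le_diff) auto
  qed
  moreover have "N * ((Dx + 1) * (Dy + 1)) < card U"
    using count by (simp add: U_def card_ansatz_vars)
  ultimately obtain c where "\<exists>u\<in>U. c u \<noteq> 0" and "\<forall>k<N. \<Phi> c k = 0"
    using linear_bideg_system_nontrivial_solution[of U N \<Phi> Dx Dy] by blast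
  then show ?thesis by (auto simp: \<Phi>_def U_def)
qed

lemma ansatz_op_nonzero:
  fixes P :: "'a::idom poly poly"
  assumes "P \<noteq> 0" and "\<exists>u\<in>ansatz_vars r d N m n. c u \<noteq> 0"
    and "\<forall>k<N. ansatz_numer P L e r d c k = P * ansatz_quot m n c k"
  shows "ansatz_op r d c \<noteq> 0"
proof
  assume op0: "ansatz_op r d c = 0"
  then have coeff0: "ansatz_coeff d c i = 0" if "i \<le> r" for i
    using coeff_ansatz_op[of r d c i] that by simp
  have "c (Inl (i, j)) = 0" if "i \<le> r" "j \<le> d" for i j
    using arg_cong[OF coeff0[OF that(1)], of "\<lambda>p. coeff p j"] that by (simp add: coeff_ansatz_coeff)
  moreover have "c (Inr (k, i, j)) = 0" if "k < N" "i \<le> m" "j \<le> n" for k i j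
  proof -
    have "P * ansatz_quot m n c k = 0"
      using assms(3) that(1) coeff0 by (simp add: ansatz_numer_def)
    with assms(1) have "ansatz_quot m n c k = 0" by simp
    then show ?thesis using that coeff_ansatz_quot[of m n c k j i] by simp
  qed
  ultimately show False using assms(2) by (auto simp: ansatz_vars_def)
qed

text \<open>Multiplying \<open>M(f \<circ> g)\<close> by \<open>z\<^sup>r\<close>, \<open>z = P\<^sub>y(x,g)\<^sup>e l(x,g)\<close>, turns it into
  \<open>\<Sum>\<^sub>k N\<^sub>k(x,g) F\<^sub>k\<close> with numerators \<open>N\<^sub>k\<close> divisible by \<open>P\<close>.\<close>

lemma ansatz_op_annihilates:
  fixes g f :: "'a::field fps"
  assumes sol: "subst_y a g P = 0" and os: "op_solution (g$0) L f" and "degree L \<ge> 1"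
    and e: "e = 1 \<and> pderiv (pderiv P) = 0 \<or> e = 2"
    and z: "subst_y a g (comp_denom P L e) \<noteq> 0"
    and eqs: "\<forall>k<degree L. ansatz_numer P L e r d c k = P * ansatz_quot m n c k"
  shows "op_solution a (ansatz_op r d c) (comp_at f g)"
proof -
  define h z where "h = comp_at f g" and "z = subst_y a g (comp_denom P L e)"
  have "z ^ r * apply_op a (ansatz_op r d c) h
      = (\<Sum>i\<le>r. poly_at a (ansatz_coeff d c i) * z ^ (r - i) * ((fps_deriv ^^ i) h * z ^ i))"
    unfolding apply_op_ansatz_op sum_distrib_left
  proof (rule sum.cong[OF refl])
    fix i assume "i \<in> {..r}"
    then have "z ^ r = z ^ (r - i) * z ^ i" by (simp flip: power_add)
    then show "z ^ r * (poly_at a (ansatz_coeff d c i) * (fps_deriv ^^ i) h)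
        = poly_at a (ansatz_coeff d c i) * z ^ (r - i) * ((fps_deriv ^^ i) h * z ^ i)"
      by (simp add: algebra_simps)
  qed
  also have "\<dots> = comp_comb a g f (degree L) (ansatz_numer P L e r d c)"
    unfolding h_def z_def comp_deriv_coeffs_represent[OF sol os assms(3) e]
    by (simp add: ansatz_numer_def comp_comb_def sum_distrib_left sum_distrib_right algebra_simps
        sum.swap[of _ "{..r}"])
  also have "\<dots> = 0"
    using eqs sol by (simp add: comp_comb_def)
  finally show ?thesis
    using z by (simp add: op_solution_def h_def z_def)
qed

definition annihilates_compositions :: "'a::field poly poly \<Rightarrow> 'a diffop \<Rightarrow> 'a diffop \<Rightarrow> bool" where
  "annihilates_compositions P L M \<longleftrightarrow>
     (\<forall>\<alpha> g f. alg_solution \<alpha> P g \<and> op_solution (fps_nth g 0) L f \<longrightarrow> op_solution \<alpha> M (comp_at f g))"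

lemma pderiv_pderiv_eq_0: "degree P \<le> 1 \<Longrightarrow> pderiv (pderiv (P :: 'a::idom poly)) = 0"
  by (intro poly_eqI) (simp add: coeff_pderiv coeff_eq_0)

lemma no_y_divisor_nonzero: "no_y_divisor P \<Longrightarrow> P \<noteq> 0"
proof
  assume "no_y_divisor P" and "P = 0"
  moreover have "map_poly (\<lambda>c. [:c:]) [:0, 1 :: 'a alg_closure:] dvd map_poly (map_poly to_ac) P"
    using \<open>P = 0\<close> by simp
  moreover have "degree [:0, 1 :: 'a alg_closure:] > 0" by simp
  ultimately show False unfolding no_y_divisor_def by blast
qed

lemma annihilator_exists_of_count:
  fixes P L :: "'a::field_char_0 poly poly" and r d e dP rP dL :: nat
  assumes L: "degree L \<ge> 1" "\<forall>k. degree (coeff L k) \<le> dL"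
    and P: "bideg_le P dP rP" "squarefree_over_Cx P" "no_y_divisor P"
    and e: "e = 1 \<and> rP = 1 \<or> e = 2" and "r \<ge> 1"
  defines "Dx \<equiv> d + r * (e * dP)" and "Dy \<equiv> r * ((e - 1) * (rP - 1) + rP + dL)"
  assumes count: "degree L * ((Dx + 1) * (Dy + 1))
      < (r + 1) * (d + 1) + degree L * ((Dx - dP + 1) * (Dy - rP + 1))"
  shows "\<exists>M. M \<noteq> 0 \<and> op_order M \<le> r \<and> op_degree M \<le> d \<and> annihilates_compositions P L M"
proof -
  have e1: "e \<ge> 1" using e by auto
  have "1 * dP \<le> (r * e) * dP" using \<open>r \<ge> 1\<close> e1 by (intro mult_le_mono1) simp
  then have "dP \<le> Dx" unfolding Dx_def mult_1 mult.assoc by linarith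
  have "1 * rP \<le> r * ((e - 1) * (rP - 1) + rP + dL)" using \<open>r \<ge> 1\<close> by (intro mult_le_mono) simp_all
  then have "rP \<le> Dy" by (simp add: Dy_def)
  obtain c where c: "\<exists>u\<in>ansatz_vars r d (degree L) (Dx - dP) (Dy - rP). c u \<noteq> 0"
    and eqs: "\<forall>k<degree L. ansatz_numer P L e r d c k = P * ansatz_quot (Dx - dP) (Dy - rP) c k"
    using ansatz_solution_exists[OF P(1) L(2) e1] \<open>dP \<le> Dx\<close> \<open>rP \<le> Dy\<close> count
    unfolding Dx_def Dy_def by blast
  have "annihilates_compositions P L (ansatz_op r d c)"
    unfolding annihilates_compositions_def
  proof (intro allI impI, elim conjE)
    fix \<alpha> g f assume "alg_solution \<alpha> P g" and os: "op_solution (g$0) L f"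
    then have sol: "subst_y \<alpha> g P = 0" by (simp add: alg_solution_iff_subst_y)
    have "e = 1 \<longrightarrow> degree P \<le> 1" using e P(1) by (auto simp: bideg_le_def)
    then have e': "e = 1 \<and> pderiv (pderiv P) = 0 \<or> e = 2" using e by (auto intro: pderiv_pderiv_eq_0)
    have "L \<noteq> 0" using L(1) by auto
    then have "subst_y \<alpha> g (comp_denom P L e) \<noteq> 0"
      by (simp add: comp_denom_def subst_y_pderiv_nonzero[OF P(2) sol]
          subst_y_lead_y_nonzero[OF P(3) sol])
    from ansatz_op_annihilates[OF sol os L(1) e' this eqs]
    show "op_solution \<alpha> (ansatz_op r d c) (comp_at f g)" .
  qed
  with ansatz_op_nonzero[OF no_y_divisor_nonzero[OF P(3)] c eqs] show ?thesis
    by (intro exI[of _ "ansatz_op r d c"]) (simp add: op_order_ansatz_op op_degree_ansatz_op)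
qed

section \<open>Degree counting\<close>

lemma ansatz_unknowns_exceed_equations:
  fixes rL rP dP d r e c K :: nat
  assumes "rL * rP \<le> r" and "rP \<ge> 1" and "dP \<le> d + r * (e * dP)" and "rP \<le> r * c"
    and budget: "e * rP + c \<le> K * rP"
    and hyp: "d * (rL * rP) + r * K * dP * rL * rP \<le> d * (r + 1)"
  defines "Dx \<equiv> d + r * (e * dP)" and "Dy \<equiv> r * c"
  shows "rL * ((Dx + 1) * (Dy + 1)) < (r + 1) * (d + 1) + rL * ((Dx - dP + 1) * (Dy - rP + 1))"
proof -
  obtain bx yb where Dx: "Dx = bx + dP" and Dy: "Dy = yb + rP"
    using assms(3,4) unfolding Dx_def Dy_def by (metis le_add_diff_inverse2)
  define T where "T = rL * ((bx + 1) * rP + dP * (yb + 1) + dP * rP)"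
  have "T + rL * dP * rP = rL * rP * (Dx + 1) + rL * dP * (Dy + 1)"
    by (simp add: T_def Dx Dy algebra_simps)
  also have "\<dots> = rL * rP * d + r * rL * dP * (e * rP + c) + rL * rP + rL * dP"
    by (simp add: Dx_def Dy_def algebra_simps)
  also have "\<dots> \<le> rL * rP * d + r * rL * dP * (K * rP) + r + rL * dP * rP"
    using assms(1,2) budget by (intro add_mono mult_le_mono2) simp_all
  also have "\<dots> \<le> d * (r + 1) + r + rL * dP * rP"
    using hyp by (simp add: algebra_simps)
  finally have "T < (r + 1) * (d + 1)" by (simp add: algebra_simps)
  moreover have "rL * ((Dx + 1) * (Dy + 1)) = rL * ((bx + 1) * (yb + 1)) + T"
    by (simp add: T_def Dx Dy algebra_simps)
  ultimately show ?thesis by (simp add: Dx Dy)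
qed

lemma composition_degree_budget:
  fixes rP dL :: nat
  assumes "rP \<ge> 1"
  defines "e \<equiv> if rP = 1 then 1 else 2"
  shows "e * rP + ((e - 1) * (rP - 1) + rP + dL) \<le> (3 * rP + dL - 1) * rP"
proof (cases "rP = 1")
  case False
  with assms(1) have "2 * rP \<le> rP * rP" and "dL \<le> dL * rP" by simp_all
  moreover have "(3 * rP + dL - 1) * rP = 3 * (rP * rP) + dL * rP - rP"
    using assms(1) by (simp add: algebra_simps diff_mult_distrib)
  moreover have "e * rP + ((e - 1) * (rP - 1) + rP + dL) = 4 * rP + dL - 1"
    using False assms(1) by (simp add: e_def)
  ultimately show ?thesis by linarith
qed (simp add: e_def)

lemma annihilator_exists_nondegenerate:
  fixes P L :: "'a::field_char_0 poly poly" and r d dP rP dL :: nat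
  assumes L: "degree L \<ge> 1" "\<forall>k. degree (coeff L k) \<le> dL"
    and P: "bideg_le P dP rP" "squarefree_over_Cx P" "no_y_divisor P" and "rP \<ge> 1"
    and "degree L * rP \<le> r"
    and hyp: "d * (degree L * rP) + r * (3 * rP + dL - 1) * dP * degree L * rP \<le> d * (r + 1)"
  shows "\<exists>M. M \<noteq> 0 \<and> op_order M \<le> r \<and> op_degree M \<le> d \<and> annihilates_compositions P L M"
proof -
  define e :: nat where "e = (if rP = 1 then 1 else 2)"
  have e: "e = 1 \<and> rP = 1 \<or> e = 2" by (simp add: e_def)
  have "1 * 1 \<le> degree L * rP" using L(1) \<open>rP \<ge> 1\<close> by (intro mult_le_mono) simp_all
  with \<open>degree L * rP \<le> r\<close> have "r \<ge> 1" by linarith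
  have "1 * dP \<le> (r * e) * dP" using \<open>r \<ge> 1\<close> e by (intro mult_le_mono1) auto
  then have "dP \<le> d + r * (e * dP)" unfolding mult_1 mult.assoc by linarith
  moreover have "1 * rP \<le> r * ((e - 1) * (rP - 1) + rP + dL)"
    using \<open>r \<ge> 1\<close> by (intro mult_le_mono) simp_all
  ultimately show ?thesis
    using annihilator_exists_of_count[OF L P e \<open>r \<ge> 1\<close>]
      ansatz_unknowns_exceed_equations[OF \<open>degree L * rP \<le> r\<close> \<open>rP \<ge> 1\<close> _ _ composition_degree_budget[OF \<open>rP \<ge> 1\<close>] hyp]
    by (simp add: e_def)
qed

lemma annihilates_compositions_one:
  assumes "coeff L (degree L) \<noteq> 0" and "no_y_divisor P" and "degree L = 0 \<or> degree P = 0"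
  shows "annihilates_compositions P L 1"
  unfolding annihilates_compositions_def
proof (intro allI impI, elim conjE)
  fix \<alpha> g f assume alg: "alg_solution \<alpha> P g" and op: "op_solution (g$0) L f"
  show "op_solution \<alpha> 1 (comp_at f g)"
  proof (cases "degree P = 0")
    case True
    with alg have "poly_at \<alpha> (coeff P 0) = 0" by (simp add: alg_solution_def)
    with True have "P = 0" by (metis degree_0_id poly_at_eq_0_iff pCons_0_0)
    with no_y_divisor_nonzero[OF assms(2)] show ?thesis by simp
  next
    case False
    with assms(3) have "degree L = 0" by simp
    with op assms(1) have "f = 0" by (simp add: op_solution_def apply_op_def)
    then show ?thesis by (simp add: op_solution_def apply_op_def comp_at_def fps_compose_0)
  qed
qed

lemma degree_bound_of_real:
  fixes r d rL rP dL dP :: nat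
  assumes "rL * rP \<le> r"
    and "real d \<ge> real r * (3 * real rP + real dL - 1) * real dP * real rL * real rP
                    / (real r + 1 - real rL * real rP)"
  shows "d * (rL * rP) + r * (3 * rP + dL - 1) * dP * rL * rP \<le> d * (r + 1)"
proof (cases "rP = 0")
  case False
  define K where "K = 3 * rP + dL - 1"
  have K: "real K = 3 * real rP + real dL - 1" using False by (simp add: K_def of_nat_diff)
  have "real rL * real rP \<le> real r" using assms(1) by (metis of_nat_le_iff of_nat_mult)
  then have "real r * real K * real dP * real rL * real rP \<le> real d * (real r + 1 - real rL * real rP)"
    using assms(2) by (simp add: K pos_divide_le_eq)
  then have "real (d * (rL * rP) + r * K * dP * rL * rP) \<le> real (d * (r + 1))"
    by (simp add: algebra_simps)
  then show ?thesis unfolding K_def of_nat_le_iff .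
qed simp

lemma annihilator_exists:
  fixes P L :: "'a::field_char_0 poly poly" and r d rL dL rP dP :: nat
  assumes L: "degree L = rL" "coeff L rL \<noteq> 0" "\<forall>k. degree (coeff L k) \<le> dL"
    and P: "degree P = rP" "bideg_le P dP rP" "squarefree_over_Cx P" "no_y_divisor P"
    and "rL * rP \<le> r" and "d * (rL * rP) + r * (3 * rP + dL - 1) * dP * rL * rP \<le> d * (r + 1)"
  shows "\<exists>M. M \<noteq> 0 \<and> op_order M \<le> r \<and> op_degree M \<le> d \<and> annihilates_compositions P L M"
proof (cases "rL = 0 \<or> rP = 0")
  case True
  then have "annihilates_compositions P L 1"
    using L(1,2) P(1,4) by (intro annihilates_compositions_one) auto
  then show ?thesis by (intro exI[of _ 1]) (simp add: op_order_def op_degree_def)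
next
  case False
  then show ?thesis
    using annihilator_exists_nondegenerate[of L dL P dP rP r d] L P assms(8,9) by simp
qed

theorem theorem3:
  fixes L :: "'a::field_char_0 diffop"
    and P :: "'a poly poly"
    and rL dL rP dP r d :: nat
  assumes "op_order L = rL" and "coeff L rL \<noteq> 0"
    and "\<forall>k. degree (coeff L k) \<le> dL"
    and "deg_y P = rP" and "deg_x P = dP"
    and "squarefree_over_Cx P" and "no_y_divisor P"
    and "r \<ge> rL * rP"
    and "real d \<ge> real r * (3 * real rP + real dL - 1) * real dP * real rL * real rP
                    / (real r + 1 - real rL * real rP)"
  shows "(\<exists>M :: 'a diffop. M \<noteq> 0 \<and> op_order M \<le> r \<and> op_degree M \<le> d \<and>
            (\<forall>\<alpha> g f. alg_solution \<alpha> P g \<and> op_solution (fps_nth g 0) L f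
                 \<longrightarrow> op_solution \<alpha> M (comp_at f g)))
      \<and> (\<exists>M :: 'a diffop. M \<noteq> 0 \<and> op_order M \<le> rL * rP \<and>
            op_degree M \<le> (3 * rP + dL - 1) * dP * rL^2 * rP^2 \<and>
            (\<forall>\<alpha> g f. alg_solution \<alpha> P g \<and> op_solution (fps_nth g 0) L f
                 \<longrightarrow> op_solution \<alpha> M (comp_at f g)))"
proof -
  have "degree L = rL" using assms(1) by (simp add: op_order_def)
  moreover have "degree P = rP" and "bideg_le P dP rP"
    using assms(4,5) bideg_le_deg_x_deg_y[of P] by (simp_all add: deg_y_def)
  moreover have "d' * (rL * rP) + rL * rP * K * dP * rL * rP \<le> d' * (rL * rP + 1)"
    if "d' = K * dP * rL^2 * rP^2" for d' K :: nat
    by (simp add: that algebra_simps power2_eq_square)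
  ultimately show ?thesis
    using annihilator_exists[of L rL dL P rP dP] assms(2,3,6,7,8)
      degree_bound_of_real[OF assms(8,9)]
    unfolding annihilates_compositions_def by blast
qed

end
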